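(* Let $\hat{\mathcal H}$ be a graph on vertex set $[n]$ with at least one edge that is partially shifted and triangle-free. Then there exist disjoint nonempty sets $X,Y\subset[n]$ with $X\cup Y=[|X|+|Y|]$ such that the edge set of $\hat{\mathcal H}$ is exactly $\{\{x,y\}:x\in X,\ y\in Y\}$.
   Context: A graph $\hat{\mathcal H}$ on $[n]$ is partially shifted if for all distinct $i,j,x\in[n]$ with $x<j$: if $\{i,j\}$ is an edge and $\{x,j\}$ is not an edge, then $\{i,x\}$ is an edge. *)

theory Defs
  imports Main
begin

definition graph_on :: "nat \<Rightarrow> nat set set \<Rightarrow> bool" where
  "graph_on n E \<longleftrightarrow> (\<forall>e\<in>E. e \<subseteq> {1..n} \<and> card e = 2)"

definition partially_shifted :: "nat \<Rightarrow> nat set set \<Rightarrow> bool" where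
  "partially_shifted n E \<longleftrightarrow>
     (\<forall>i\<in>{1..n}. \<forall>j\<in>{1..n}. \<forall>x\<in>{1..n}.
        i \<noteq> j \<and> i \<noteq> x \<and> x \<noteq> j \<and> x < j \<and> {i, j} \<in> E \<and> {x, j} \<notin> E
        \<longrightarrow> {i, x} \<in> E)"

definition triangle_free :: "nat set set \<Rightarrow> bool" where
  "triangle_free E \<longleftrightarrow> \<not> (\<exists>a b c. {a, b} \<in> E \<and> {b, c} \<in> E \<and> {a, c} \<in> E)"

end

theory Submission
  imports Defs
begin

text \<open>Call a vertex non-isolated if it lies on an edge, i.e. if it belongs to \<open>\<Union>E\<close>.
  Shiftedness alone forces the non-isolated vertices to form an initial segment \<open>{1..m}\<close>:
  every vertex below the largest one \<open>m\<close> is adjacent to \<open>m\<close> or to a fixed neighbour of \<open>m\<close>.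
  Together with triangle-freeness, shiftedness also makes every non-isolated vertex adjacent
  to an endpoint of any edge \<open>{a,b}\<close>. Hence the neighbourhoods of \<open>b\<close> and of \<open>a\<close> partition
  the non-isolated vertices, each is independent, and the two are completely joined.\<close>

lemma graph_on_edgeE:
  assumes "graph_on n E" and "e \<in> E"
  obtains u v where "e = {u, v}" and "u \<noteq> v"
proof -
  have "card e = 2" using assms unfolding graph_on_def by blast
  then show ?thesis using that unfolding card_2_iff by blast
qed

lemma graph_on_edgeD:
  assumes "graph_on n E" and "{u, v} \<in> E"
  shows "u \<in> {1..n}" and "v \<in> {1..n}" and "u \<noteq> v"
proof -
  have "{u, v} \<subseteq> {1..n}" and "card {u, v} = 2"
    using assms unfolding graph_on_def by blast+
  then show "u \<in> {1..n}" "v \<in> {1..n}" "u \<noteq> v"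
    by (auto simp: card_insert_if split: if_splits)
qed

lemma non_isolated_iff:
  assumes "graph_on n E"
  shows "x \<in> \<Union>E \<longleftrightarrow> (\<exists>y. {x, y} \<in> E)"
proof
  assume "x \<in> \<Union>E"
  then obtain e where "e \<in> E" "x \<in> e" by blast
  then obtain u v where "e = {u, v}" using graph_on_edgeE[OF assms] by blast
  then show "\<exists>y. {x, y} \<in> E"
    using \<open>e \<in> E\<close> \<open>x \<in> e\<close> by (auto simp: insert_commute)
qed blast

lemma non_isolated_subset:
  assumes "graph_on n E"
  shows "\<Union>E \<subseteq> {1..n}"
  using assms unfolding graph_on_def by blast

lemma partially_shiftedD:
  assumes "graph_on n E" and "partially_shifted n E"
    and "{i, j} \<in> E" and "x \<in> {1..n}" and "x \<noteq> i" and "x \<noteq> j" and "x < j"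
    and "{x, j} \<notin> E"
  shows "{i, x} \<in> E"
proof -
  have "i \<in> {1..n}" "j \<in> {1..n}" "i \<noteq> j"
    using graph_on_edgeD[OF assms(1,3)] by auto
  with assms(2)[unfolded partially_shifted_def, rule_format, of i j x] assms(3-)
  show ?thesis by blast
qed

lemma triangle_freeD:
  assumes "triangle_free E" and "{a, b} \<in> E" and "{b, c} \<in> E"
  shows "{a, c} \<notin> E"
  using assms unfolding triangle_free_def by blast

lemma non_isolated_initial_segment:
  assumes "graph_on n E" and "partially_shifted n E" and "E \<noteq> {}"
  shows "\<Union>E = {1..Max (\<Union>E)}"
proof -
  let ?m = "Max (\<Union>E)"
  have sub: "\<Union>E \<subseteq> {1..n}"
    using non_isolated_subset[OF assms(1)] .
  then have fin: "finite (\<Union>E)"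
    using finite_subset by blast
  obtain u v where "{u, v} \<in> E"
    using assms(3) graph_on_edgeE[OF assms(1)] by (metis ex_in_conv)
  then have "\<Union>E \<noteq> {}"
    by blast
  then have m: "?m \<in> \<Union>E"
    using fin Max_in by blast
  then obtain i where "{?m, i} \<in> E"
    using non_isolated_iff[OF assms(1)] by blast
  then have im: "{i, ?m} \<in> E"
    by (simp add: insert_commute)
  have "x \<in> \<Union>E" if x: "x \<in> {1..?m}" for x
  proof (cases "x = ?m \<or> x = i \<or> {x, ?m} \<in> E")
    case True
    then show ?thesis using im m by blast
  next
    case False
    have "x \<in> {1..n}"
      using x m sub by auto
    moreover have "x \<noteq> i" "x \<noteq> ?m" "x < ?m" "{x, ?m} \<notin> E"
      using False x by auto
    ultimately have "{i, x} \<in> E"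
      using partially_shiftedD[OF assms(1,2) im] by blast
    then show ?thesis by blast
  qed
  moreover have "x \<in> {1..?m}" if "x \<in> \<Union>E" for x
    using that fin sub by auto
  ultimately show ?thesis by blast
qed

lemma non_isolated_adjacent_to_edge:
  assumes "graph_on n E" and "partially_shifted n E" and "triangle_free E"
    and ij: "{i, j} \<in> E" and x: "x \<in> \<Union>E" "x \<noteq> i" "x \<noteq> j"
  shows "{x, i} \<in> E \<or> {x, j} \<in> E"
proof (rule ccontr)
  assume "\<not> ?thesis"
  then have no_xi: "{x, i} \<notin> E" "{i, x} \<notin> E" and no_xj: "{x, j} \<notin> E" "{j, x} \<notin> E"
    by (auto simp: insert_commute)
  have ji: "{j, i} \<in> E"
    using ij by (simp add: insert_commute)
  have xn: "x \<in> {1..n}"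
    using x non_isolated_subset[OF assms(1)] by blast
  note shift = partially_shiftedD[OF assms(1,2)]
  consider "x < j" | "x < i" | "i < x" "j < x"
    using x by linarith
  then show False
  proof cases
    case 1
    then show False using shift[OF ij xn x(2,3)] no_xi no_xj by blast
  next
    case 2
    then show False using shift[OF ji xn x(3,2)] no_xi no_xj by blast
  next
    case 3
    \<comment> \<open>Shifting a neighbour \<open>y\<close> of \<open>x\<close> down to both \<open>i\<close> and \<open>j\<close> closes a triangle.\<close>
    obtain y where "{x, y} \<in> E"
      using x(1) non_isolated_iff[OF assms(1)] by blast
    then have yx: "{y, x} \<in> E"
      by (simp add: insert_commute)
    have "y \<noteq> i" "y \<noteq> j"
      using \<open>{x, y} \<in> E\<close> no_xi no_xj by auto
    have "i \<in> {1..n}" "j \<in> {1..n}"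
      using graph_on_edgeD[OF assms(1) ij] by auto
    then have "{y, i} \<in> E" "{y, j} \<in> E"
      using 3 \<open>y \<noteq> i\<close> \<open>y \<noteq> j\<close> no_xi no_xj shift[OF yx] by auto
    moreover have "{i, y} \<in> E"
      using \<open>{y, i} \<in> E\<close> by (simp add: insert_commute)
    ultimately show False
      using triangle_freeD[OF assms(3)] ij by blast
  qed
qed

lemma neighbourhoods_of_edge_complete_bipartite:
  assumes "graph_on n E" and "partially_shifted n E" and "triangle_free E"
    and ab: "{a, b} \<in> E"
  defines "X \<equiv> {x. {x, b} \<in> E}" and "Y \<equiv> {y. {y, a} \<in> E}"
  shows "X \<inter> Y = {}" and "X \<union> Y = \<Union>E" and "E = {{x, y} | x y. x \<in> X \<and> y \<in> Y}"
proof -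
  note adjacent = non_isolated_adjacent_to_edge[OF assms(1-3)]
  note no_triangle = triangle_freeD[OF assms(3)]
  have ba: "{b, a} \<in> E"
    using ab by (simp add: insert_commute)
  show disjoint: "X \<inter> Y = {}"
  proof (rule ccontr)
    assume "X \<inter> Y \<noteq> {}"
    then obtain z where "{z, b} \<in> E" "{z, a} \<in> E"
      unfolding X_def Y_def by blast
    then have "{a, z} \<in> E"
      by (simp add: insert_commute)
    with no_triangle[OF this \<open>{z, b} \<in> E\<close>] ab show False by blast
  qed
  show cover: "X \<union> Y = \<Union>E"
  proof
    show "X \<union> Y \<subseteq> \<Union>E"
      unfolding X_def Y_def by blast
    show "\<Union>E \<subseteq> X \<union> Y"
    proof
      fix x assume x: "x \<in> \<Union>E"
      consider "x = a" | "x = b" | "x \<noteq> a" "x \<noteq> b" by blast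
      then show "x \<in> X \<union> Y"
      proof cases
        case 3
        then show ?thesis
          using adjacent[OF ab x] unfolding X_def Y_def by blast
      qed (use ab ba in \<open>auto simp: X_def Y_def\<close>)
    qed
  qed
  show "E = {{x, y} | x y. x \<in> X \<and> y \<in> Y}"
  proof
    show "E \<subseteq> {{x, y} | x y. x \<in> X \<and> y \<in> Y}"
    proof
      fix e assume "e \<in> E"
      then obtain u v where e: "e = {u, v}"
        using graph_on_edgeE[OF assms(1)] by blast
      with \<open>e \<in> E\<close> have uv: "{u, v} \<in> E" "{v, u} \<in> E"
        by (simp_all add: insert_commute)
      have "u \<in> X \<union> Y" "v \<in> X \<union> Y"
        using cover uv by blast+
      moreover have "\<not> (u \<in> X \<and> v \<in> X)" "\<not> (u \<in> Y \<and> v \<in> Y)"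
        using uv no_triangle unfolding X_def Y_def by blast+
      ultimately have "u \<in> X \<and> v \<in> Y \<or> v \<in> X \<and> u \<in> Y"
        by blast
      then show "e \<in> {{x, y} | x y. x \<in> X \<and> y \<in> Y}"
        using e insert_commute by blast
    qed
    show "{{x, y} | x y. x \<in> X \<and> y \<in> Y} \<subseteq> E"
    proof clarify
      fix x y assume "x \<in> X" "y \<in> Y"
      then have xb: "{x, b} \<in> E" and ya: "{y, a} \<in> E"
        unfolding X_def Y_def by auto
      show "{x, y} \<in> E"
      proof (cases "y = b")
        case False
        have "y \<in> \<Union>E" "y \<noteq> x"
          using ya disjoint \<open>x \<in> X\<close> \<open>y \<in> Y\<close> by blast+
        moreover have "{y, b} \<notin> E"
          using no_triangle[OF ya ab] .
        ultimately have "{y, x} \<in> E"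
          using adjacent[OF xb] False by blast
        then show ?thesis
          by (simp add: insert_commute)
      qed (use xb in simp)
    qed
  qed
qed

theorem lemma1p2:
  fixes n :: nat and E :: "nat set set"
  assumes "graph_on n E"
    and "E \<noteq> {}"
    and "partially_shifted n E"
    and "triangle_free E"
  shows "\<exists>X Y. X \<noteq> {} \<and> Y \<noteq> {} \<and> X \<inter> Y = {} \<and> X \<subseteq> {1..n} \<and> Y \<subseteq> {1..n}
           \<and> X \<union> Y = {1..card X + card Y}
           \<and> E = {{x, y} | x y. x \<in> X \<and> y \<in> Y}"
proof -
  obtain a b where ab: "{a, b} \<in> E"
    using assms(2) graph_on_edgeE[OF assms(1)] by (metis ex_in_conv)
  define X where "X = {x. {x, b} \<in> E}"
  define Y where "Y = {y. {y, a} \<in> E}"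
  have disjoint: "X \<inter> Y = {}" and cover: "X \<union> Y = \<Union>E"
    and bipartite: "E = {{x, y} | x y. x \<in> X \<and> y \<in> Y}"
    using neighbourhoods_of_edge_complete_bipartite[OF assms(1,3,4) ab] unfolding X_def Y_def
    by blast+
  have segment: "X \<union> Y = {1..Max (\<Union>E)}"
    using cover non_isolated_initial_segment[OF assms(1,3,2)] by simp
  have "X \<noteq> {}" "Y \<noteq> {}"
    using ab unfolding X_def Y_def by (auto simp: insert_commute)
  moreover have "X \<subseteq> {1..n}" "Y \<subseteq> {1..n}"
    using cover non_isolated_subset[OF assms(1)] by auto
  moreover have "X \<union> Y = {1..card X + card Y}"
  proof -
    have "finite X" "finite Y"
      using segment by (metis finite_Un finite_atLeastAtMost)+
    then have "card X + card Y = Max (\<Union>E)"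
      using segment disjoint card_Un_disjoint[of X Y] by simp
    then show ?thesis
      using segment by simp
  qed
  ultimately show ?thesis
    using disjoint bipartite by blast
qed

end
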